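(* For the unique formal series solution $(f^{0,+},g^{0,+})$ of $q$-$P(A_1)$ with $F^{0,+}_{1,1}=1$, $G^{0,+}_{1,1}=\Lambda$, the coefficients of $t^1$ are $$F_1^{0,+}(\phi)=\sum_{i\le1}F^{0,+}_{1,i}\phi^i=\phi+F_{\rm eq}+\mu\phi^{-1},\qquad G_1^{0,+}(\phi)=\sum_{i\le1}G^{0,+}_{1,i}\phi^i=\Lambda\phi+G_{\rm eq}+\frac{b_1b_2b_3b_4}{\Lambda}\mu\phi^{-1},$$ i.e. $F^{0,+}_{1,i}=G^{0,+}_{1,i}=0$ for $i\le-2$.
   Context: Parameters $\mathbf b=(b_1,\dots,b_8)\in(\mathbb C^* )^8$, $q=\frac{b_1b_2b_3b_4}{b_5b_6b_7b_8}$, $B=b_1b_2b_3b_4$. The equation $q$-$P(A_1)$ for $f=f(t)$, $g=g(t)$ is $$(gf-t^2)(g\bar f-qt^2)(g-b_5)(g-b_6)(g-b_7)(g-b_8)=(gf-1)(g\bar f-1)(g-b_1t)(g-b_2t)(g-b_3t)(g-b_4t),$$ $$(g\bar f-qt^2)(\bar g\bar f-q^2t^2)(\bar f-b_5^{-1})(\bar f-b_6^{-1})(\bar f-b_7^{-1})(\bar f-b_8^{-1})=(g\bar f-1)(\bar g\bar f-1)(\bar f-b_1^{-1}qt)(\bar f-b_2^{-1}qt)(\bar f-b_3^{-1}qt)(\bar f-b_4^{-1}qt).$$ Formal setting: $\Lambda,\phi$ are indeterminates, $\lambda=\Lambda^2/B$; formal solutions are pairs $f=\sum_{n\ge1}\sum_{i\le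 n}F_{n,i}\phi^it^n$, $g=\sum_{n\ge1}\sum_{i\le n}G_{n,i}\phi^it^n$ (coefficients depending on $(\Lambda,\mathbf b)$) satisfying both equations identically, where the shift is $t\mapsto qt$, $\phi\mapsto\lambda\phi$, $\Lambda\mapsto\Lambda$. There is a unique such solution with $F_{1,1}=1$, $G_{1,1}=\Lambda$, denoted $(f^{0,+},g^{0,+})$ with coefficients $F^{0,+}_{n,i},G^{0,+}_{n,i}$. $S_i^{\pm}$ is the $i$-th elementary symmetric polynomial in $b_1^{\pm1},\dots,b_4^{\pm1}$, and $F_{\rm eq}=-\frac{B\Lambda(S_1^++2S_1^-\Lambda+S_3^-\Lambda^2)}{(B-\Lambda^2)^2}$, $G_{\rm eq}=-\frac{B\Lambda(S_3^++2S_1^+\Lambda+S_1^-\Lambda^2)}{(B-\Lambda^2)^2}$, $\mu=\frac{\Lambda\prod_{1\le a<c\le4}(\Lambda+b_ab_c)}{(B-\Lambda^2)^4}$. *)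

theory Defs
  imports Complex_Main "HOL-Computational_Algebra.Formal_Laurent_Series"
    "HOL-Computational_Algebra.Fraction_Field"
begin

unbundle fps_syntax

text \<open>Coefficient field: rational functions in the indeterminate Lambda over the complex numbers.\<close>
type_synonym K = "complex poly fract"

text \<open>A series in the indeterminate phi bounded above in the exponent of phi is represented
  as a formal Laurent series in psi = phi^(-1): the coefficient of phi^i is the coefficient
  of psi^(-i).\<close>
type_synonym R = "K fls"
type_synonym S = "R fps"

definition cK :: "complex \<Rightarrow> K" where "cK z = Fract [:z:] 1"

definition LambdaK :: K where "LambdaK = Fract [:0, 1:] 1"

definition cS :: "K \<Rightarrow> S" where "cS c = fps_const (fls_const c)"

definition BB :: "complex \<Rightarrow> complex \<Rightarrow> complex \<Rightarrow> complex \<Rightarrow> complex"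
  where "BB b1 b2 b3 b4 = b1 * b2 * b3 * b4"

definition qq :: "complex \<Rightarrow> complex \<Rightarrow> complex \<Rightarrow> complex \<Rightarrow>
    complex \<Rightarrow> complex \<Rightarrow> complex \<Rightarrow> complex \<Rightarrow> complex"
  where "qq b1 b2 b3 b4 b5 b6 b7 b8 = (b1 * b2 * b3 * b4) / (b5 * b6 * b7 * b8)"

definition lamK :: "complex \<Rightarrow> K" where "lamK B = LambdaK ^ 2 / cK B"

text \<open>phi \<mapsto> lam * phi on a series in phi: the coefficient of phi^i (= psi^(-i)) is
  multiplied by lam^i.\<close>
definition phi_scale :: "K \<Rightarrow> R \<Rightarrow> R" where
  "phi_scale lam x = Abs_fls (\<lambda>j. lam powi (- j) * (x $$ j))"

text \<open>The shift t \<mapsto> q t, phi \<mapsto> lam phi, Lambda \<mapsto> Lambda.\<close>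
definition qshift :: "complex \<Rightarrow> K \<Rightarrow> S \<Rightarrow> S" where
  "qshift q lam f = Abs_fps (\<lambda>n. fls_const (cK q ^ n) * phi_scale lam (f $ n))"

text \<open>Formal solution of q-P(A1) in the sense of the paper
  (f = sum_{n>=1} sum_{i<=n} F_{n,i} phi^i t^n, likewise g).\<close>
definition formal_solution ::
  "complex \<Rightarrow> complex \<Rightarrow> complex \<Rightarrow> complex \<Rightarrow>
   complex \<Rightarrow> complex \<Rightarrow> complex \<Rightarrow> complex \<Rightarrow> S \<Rightarrow> S \<Rightarrow> bool" where
  "formal_solution b1 b2 b3 b4 b5 b6 b7 b8 f g \<longleftrightarrow>
     (let q = qq b1 b2 b3 b4 b5 b6 b7 b8;
          lam = lamK (BB b1 b2 b3 b4);
          t = fps_X :: S;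
          c = (\<lambda>z. cS (cK z));
          fb = qshift q lam f;
          gb = qshift q lam g
      in f $ 0 = 0 \<and> g $ 0 = 0 \<and>
         (\<forall>n::nat. \<forall>i::int. i > int n \<longrightarrow> (f $ n) $$ (- i) = 0 \<and> (g $ n) $$ (- i) = 0) \<and>
         (g * f - t ^ 2) * (g * fb - c q * t ^ 2) *
            (g - c b5) * (g - c b6) * (g - c b7) * (g - c b8)
          = (g * f - 1) * (g * fb - 1) *
            (g - c b1 * t) * (g - c b2 * t) * (g - c b3 * t) * (g - c b4 * t) \<and>
         (g * fb - c q * t ^ 2) * (gb * fb - c (q ^ 2) * t ^ 2) *
            (fb - c (inverse b5)) * (fb - c (inverse b6)) * (fb - c (inverse b7)) * (fb - c (inverse b8))
          = (g * fb - 1) * (gb * fb - 1) *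
            (fb - c (inverse b1 * q) * t) * (fb - c (inverse b2 * q) * t) *
            (fb - c (inverse b3 * q) * t) * (fb - c (inverse b4 * q) * t))"

definition coeffF :: "S \<Rightarrow> nat \<Rightarrow> int \<Rightarrow> K" where
  "coeffF f n i = (f $ n) $$ (- i)"

definition S1 :: "complex \<Rightarrow> complex \<Rightarrow> complex \<Rightarrow> complex \<Rightarrow> complex" where
  "S1 a1 a2 a3 a4 = a1 + a2 + a3 + a4"
definition S3 :: "complex \<Rightarrow> complex \<Rightarrow> complex \<Rightarrow> complex \<Rightarrow> complex" where
  "S3 a1 a2 a3 a4 = a1 * a2 * a3 + a1 * a2 * a4 + a1 * a3 * a4 + a2 * a3 * a4"

definition Feq :: "complex \<Rightarrow> complex \<Rightarrow> complex \<Rightarrow> complex \<Rightarrow> K" where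
  "Feq b1 b2 b3 b4 =
    (let B = cK (BB b1 b2 b3 b4); L = LambdaK;
         S1p = cK (S1 b1 b2 b3 b4);
         S1m = cK (S1 (inverse b1) (inverse b2) (inverse b3) (inverse b4));
         S3m = cK (S3 (inverse b1) (inverse b2) (inverse b3) (inverse b4))
     in - (B * L * (S1p + 2 * S1m * L + S3m * L ^ 2)) / (B - L ^ 2) ^ 2)"

definition Geq :: "complex \<Rightarrow> complex \<Rightarrow> complex \<Rightarrow> complex \<Rightarrow> K" where
  "Geq b1 b2 b3 b4 =
    (let B = cK (BB b1 b2 b3 b4); L = LambdaK;
         S1p = cK (S1 b1 b2 b3 b4);
         S3p = cK (S3 b1 b2 b3 b4);
         S1m = cK (S1 (inverse b1) (inverse b2) (inverse b3) (inverse b4))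
     in - (B * L * (S3p + 2 * S1p * L + S1m * L ^ 2)) / (B - L ^ 2) ^ 2)"

definition muK :: "complex \<Rightarrow> complex \<Rightarrow> complex \<Rightarrow> complex \<Rightarrow> K" where
  "muK b1 b2 b3 b4 =
    (let B = cK (BB b1 b2 b3 b4); L = LambdaK; c = cK
     in L * (L + c (b1 * b2)) * (L + c (b1 * b3)) * (L + c (b1 * b4)) *
            (L + c (b2 * b3)) * (L + c (b2 * b4)) * (L + c (b3 * b4)) / (B - L ^ 2) ^ 4)"

end

theory Submission
  imports Defs "HOL-Computational_Algebra.Polynomial_Factorial"
begin

unbundle fps_syntax

text \<open>Because f and g vanish at t = 0, the coefficient of t^4 in the two equations of
  q-P(A1) involves only F_1 = f_1 and G_1 = g_1, on which the shift acts by phi \<mapsto> lambda phi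
  alone.  Writing F_1 = phi A(psi), G_1 = phi G(psi) with psi = 1/phi turns these two equations
  into a system of power series equations for A and G in psi.  With A(0) = 1 and G(0) = Lambda
  its coefficients are determined recursively: the linearisation at order n has determinant
  proportional to (lambda^n - 1)^2, which is non-zero because Lambda is transcendental over the
  constants.  The quadratics A = 1 + F_eq psi + mu psi^2 and G = Lambda + G_eq psi + B mu/Lambda
  psi^2 solve the system (a polynomial identity in the elementary symmetric functions of
  b_1, ..., b_4), so they are the solution.\<close>

section \<open>The coefficient field\<close>

lemma cK_conv_to_fract: "cK z = to_fract [:z:]"
  by (simp add: cK_def to_fract_def)

lemma cK_add: "cK (a + b) = cK a + cK b"
  unfolding cK_conv_to_fract by (subst to_fract_add [symmetric]) simp

lemma cK_mult: "cK (a * b) = cK a * cK b"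
  by (simp add: cK_conv_to_fract flip: to_fract_mult)

lemma cK_1 [simp]: "cK 1 = 1"
  by (simp add: cK_conv_to_fract one_pCons [symmetric])

lemma cK_eq_0_iff [simp]: "cK a = 0 \<longleftrightarrow> a = 0"
  by (simp add: cK_conv_to_fract)

lemma two_K_neq_0: "(2::K) \<noteq> 0"
proof -
  have "cK 2 = 2"
    using cK_add[of 1 1] by simp
  then show ?thesis
    by (metis cK_eq_0_iff zero_neq_numeral)
qed

lemma cK_power: "cK (a ^ n) = cK a ^ n"
  by (induct n) (simp_all add: cK_mult)

lemma cK_inverse: "cK (inverse a) = inverse (cK a)"
proof (cases "a = 0")
  case False
  then have "cK (inverse a) * cK a = 1"
    by (simp flip: cK_mult)
  then show ?thesis
    by (metis inverse_unique mult.commute)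
qed (simp add: cK_conv_to_fract)

lemma LambdaK_conv_to_fract: "LambdaK = to_fract [:0, 1:]"
  by (simp add: LambdaK_def to_fract_def)

lemma LambdaK_neq_0: "LambdaK \<noteq> 0"
  by (simp add: LambdaK_conv_to_fract)

lemma LambdaK_power: "LambdaK ^ k = to_fract ([:0, 1:] ^ k)"
  by (induct k) (simp_all add: LambdaK_conv_to_fract flip: to_fract_mult)

lemma LambdaK_power_neq_cK:
  assumes "k > 0"
  shows "LambdaK ^ k \<noteq> cK c"
proof
  assume "LambdaK ^ k = cK c"
  then have "([:0, 1:] :: complex poly) ^ k = [:c:]"
    by (simp add: LambdaK_power cK_conv_to_fract)
  then have "degree (([:0, 1:] :: complex poly) ^ k) = 0"
    by simp
  with assms show False
    by (simp add: degree_power_eq)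
qed

lemma lamK_power_neq_1:
  assumes "B \<noteq> 0" and "n > 0"
  shows "lamK B ^ n \<noteq> 1"
proof
  assume "lamK B ^ n = 1"
  then have "LambdaK ^ (2 * n) = cK (B ^ n)"
    using assms by (simp add: lamK_def power_divide power_mult cK_power)
  then show False
    using LambdaK_power_neq_cK[of "2 * n"] assms(2) by simp
qed

section \<open>The leading-order system in psi = 1/phi\<close>

text \<open>If F = phi A(1/phi), then F(lam phi) = phi (phi_scale_fps lam A)(1/phi).\<close>
definition phi_scale_fps :: "'a::field \<Rightarrow> 'a fps \<Rightarrow> 'a fps" where
  "phi_scale_fps lam A = Abs_fps (\<lambda>n. lam powi (1 - int n) * A $ n)"

lemma phi_scale_fps_nth [simp]: "phi_scale_fps lam A $ n = lam powi (1 - int n) * A $ n"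
  by (simp add: phi_scale_fps_def)

lemma phi_scale_fps_quadratic:
  fixes lam c0 c1 c2 :: "'a::field"
  assumes "lam \<noteq> 0"
  shows "phi_scale_fps lam (fps_const c0 + fps_const c1 * fps_X + fps_const c2 * fps_X ^ 2)
       = fps_const (lam * c0) + fps_const c1 * fps_X + fps_const (c2 / lam) * fps_X ^ 2"
  using assms by (intro fps_ext) (auto simp: power_int_minus field_simps)

definition residual1 ::
    "'a::field \<Rightarrow> 'a \<Rightarrow> 'a \<Rightarrow> 'a \<Rightarrow> 'a fps \<Rightarrow> 'a fps \<Rightarrow> 'a fps \<Rightarrow> 'a fps" where
  "residual1 b1 b2 b3 b4 A G C =
     fps_const (b1 * b2 * b3 * b4) * (A * G - fps_X ^ 2) * (G * C - fps_X ^ 2)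
     - (G - fps_const b1 * fps_X) * (G - fps_const b2 * fps_X) * (G - fps_const b3 * fps_X)
       * (G - fps_const b4 * fps_X)"

definition residual2 ::
    "'a::field \<Rightarrow> 'a \<Rightarrow> 'a \<Rightarrow> 'a \<Rightarrow> 'a fps \<Rightarrow> 'a fps \<Rightarrow> 'a fps \<Rightarrow> 'a fps" where
  "residual2 b1 b2 b3 b4 G C D =
     (G * C - fps_X ^ 2) * (D * C - fps_X ^ 2)
     - fps_const (b1 * b2 * b3 * b4) * (C - fps_const (inverse b1) * fps_X)
       * (C - fps_const (inverse b2) * fps_X) * (C - fps_const (inverse b3) * fps_X)
       * (C - fps_const (inverse b4) * fps_X)"

text \<open>The coefficient of t^4 of the two equations of q-P(A1), divided by powers of q, for
  F_1 = phi A(1/phi) and G_1 = phi G(1/phi), after multiplication by psi^4 = phi^(-4).\<close>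
definition leading_system ::
    "'a::field \<Rightarrow> 'a \<Rightarrow> 'a \<Rightarrow> 'a \<Rightarrow> 'a \<Rightarrow> 'a fps \<Rightarrow> 'a fps \<Rightarrow> bool" where
  "leading_system lam b1 b2 b3 b4 A G \<longleftrightarrow>
     residual1 b1 b2 b3 b4 A G (phi_scale_fps lam A) = 0 \<and>
     residual2 b1 b2 b3 b4 G (phi_scale_fps lam A) (phi_scale_fps lam G) = 0"

subsection \<open>Uniqueness\<close>

lemma fps_mult_nth_if_lower_zero:
  fixes a p :: "'a::comm_ring_1 fps"
  assumes "\<And>k. k < n \<Longrightarrow> a $ k = 0"
  shows "(a * p) $ n = a $ n * p $ 0"
proof -
  have "(a * p) $ n = (\<Sum>i=0..n. a $ i * p $ (n - i))"
    by (rule fps_mult_nth)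
  also have "\<dots> = a $ n * p $ 0 + (\<Sum>i\<in>{0..n} - {n}. a $ i * p $ (n - i))"
    by (subst sum.remove[of _ n]) auto
  also have "(\<Sum>i\<in>{0..n} - {n}. a $ i * p $ (n - i)) = 0"
    using assms by (intro sum.neutral) auto
  finally show ?thesis
    by simp
qed

lemma residual1_difference:
  fixes B A G C A' G' C' x2 u1 u2 u3 u4 :: "'a::idom"
  shows "B*(A*G - x2)*(G*C - x2) - (G-u1)*(G-u2)*(G-u3)*(G-u4)
     - (B*(A'*G' - x2)*(G'*C' - x2) - (G'-u1)*(G'-u2)*(G'-u3)*(G'-u4))
   = (A-A')*(B*G*(G*C - x2))
     + (G-G')*(B*(A'*(G*C - x2) + (A'*G' - x2)*C)
        - ((G-u2)*(G-u3)*(G-u4) + (G'-u1)*(G-u3)*(G-u4) + (G'-u1)*(G'-u2)*(G-u4)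
           + (G'-u1)*(G'-u2)*(G'-u3)))
     + (C-C')*(B*(A'*G' - x2)*G')"
  by algebra

lemma residual2_difference:
  fixes B G C D G' C' D' x2 v1 v2 v3 v4 :: "'a::idom"
  shows "(G*C - x2)*(D*C - x2) - B*(C-v1)*(C-v2)*(C-v3)*(C-v4)
     - ((G'*C' - x2)*(D'*C' - x2) - B*(C'-v1)*(C'-v2)*(C'-v3)*(C'-v4))
   = (G-G')*(C*(D*C - x2))
     + (C-C')*(G'*(D*C - x2) + (G'*C' - x2)*D'
        - B*((C-v2)*(C-v3)*(C-v4) + (C'-v1)*(C-v3)*(C-v4) + (C'-v1)*(C'-v2)*(C-v4)
           + (C'-v1)*(C'-v2)*(C'-v3)))
     + (D-D')*((G'*C' - x2)*C)"
  by algebra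

lemma residual1_difference_nth:
  fixes A G C A' G' C' :: "'a::field fps"
  assumes lower: "\<And>k. k < n \<Longrightarrow> A $ k = A' $ k \<and> G $ k = G' $ k \<and> C $ k = C' $ k"
    and "A' $ 0 = 1" "G $ 0 = L" "G' $ 0 = L" "C $ 0 = lam"
  shows "(residual1 b1 b2 b3 b4 A G C - residual1 b1 b2 b3 b4 A' G' C') $ n
    = (A $ n - A' $ n) * (b1*b2*b3*b4*L^2*lam) + (G $ n - G' $ n) * (2*(b1*b2*b3*b4)*L*lam - 4*L^3)
      + (C $ n - C' $ n) * (b1*b2*b3*b4*L^2)"
proof -
  define B where "B = fps_const (b1 * b2 * b3 * b4)"
  let ?X2 = "fps_X ^ 2 :: 'a fps" and ?u = "\<lambda>b. fps_const b * fps_X"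
  define P1 where "P1 = B*G*(G*C - ?X2)"
  define P2 where "P2 = B*(A'*(G*C - ?X2) + (A'*G' - ?X2)*C)
    - ((G - ?u b2)*(G - ?u b3)*(G - ?u b4) + (G' - ?u b1)*(G - ?u b3)*(G - ?u b4)
       + (G' - ?u b1)*(G' - ?u b2)*(G - ?u b4) + (G' - ?u b1)*(G' - ?u b2)*(G' - ?u b3))"
  define P3 where "P3 = B*(A'*G' - ?X2)*G'"
  have "residual1 b1 b2 b3 b4 A G C - residual1 b1 b2 b3 b4 A' G' C'
      = (A - A')*P1 + (G - G')*P2 + (C - C')*P3"
    unfolding residual1_def P1_def P2_def P3_def B_def by (rule residual1_difference)
  moreover have "((A - A') * P) $ n = (A $ n - A' $ n) * P $ 0"
    and "((G - G') * P) $ n = (G $ n - G' $ n) * P $ 0"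
    and "((C - C') * P) $ n = (C $ n - C' $ n) * P $ 0" for P
    by (subst fps_mult_nth_if_lower_zero; simp add: lower)+
  moreover have "P1 $ 0 = b1*b2*b3*b4*L^2*lam" and "P2 $ 0 = 2*(b1*b2*b3*b4)*L*lam - 4*L^3"
    and "P3 $ 0 = b1*b2*b3*b4*L^2"
    using assms(2-) by (simp_all add: P1_def P2_def P3_def B_def power2_eq_square
        power3_eq_cube algebra_simps)
  ultimately show ?thesis
    by simp
qed

lemma residual2_difference_nth:
  fixes G C D G' C' D' :: "'a::field fps"
  assumes lower: "\<And>k. k < n \<Longrightarrow> G $ k = G' $ k \<and> C $ k = C' $ k \<and> D $ k = D' $ k"
    and "G' $ 0 = L" "C $ 0 = lam" "C' $ 0 = lam" "D $ 0 = lam * L" "D' $ 0 = lam * L"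
  shows "(residual2 b1 b2 b3 b4 G C D - residual2 b1 b2 b3 b4 G' C' D') $ n
    = (G $ n - G' $ n) * (L*lam^3) + (C $ n - C' $ n) * (2*L^2*lam^2 - 4*(b1*b2*b3*b4)*lam^3)
      + (D $ n - D' $ n) * (L*lam^2)"
proof -
  define B where "B = fps_const (b1 * b2 * b3 * b4)"
  let ?X2 = "fps_X ^ 2 :: 'a fps" and ?v = "\<lambda>b. fps_const (inverse b) * fps_X"
  define Q1 where "Q1 = C*(D*C - ?X2)"
  define Q2 where "Q2 = G'*(D*C - ?X2) + (G'*C' - ?X2)*D'
    - B*((C - ?v b2)*(C - ?v b3)*(C - ?v b4) + (C' - ?v b1)*(C - ?v b3)*(C - ?v b4)
         + (C' - ?v b1)*(C' - ?v b2)*(C - ?v b4) + (C' - ?v b1)*(C' - ?v b2)*(C' - ?v b3))"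
  define Q3 where "Q3 = (G'*C' - ?X2)*C"
  have "residual2 b1 b2 b3 b4 G C D - residual2 b1 b2 b3 b4 G' C' D'
      = (G - G')*Q1 + (C - C')*Q2 + (D - D')*Q3"
    unfolding residual2_def Q1_def Q2_def Q3_def B_def by (rule residual2_difference)
  moreover have "((G - G') * P) $ n = (G $ n - G' $ n) * P $ 0"
    and "((C - C') * P) $ n = (C $ n - C' $ n) * P $ 0"
    and "((D - D') * P) $ n = (D $ n - D' $ n) * P $ 0" for P
    by (subst fps_mult_nth_if_lower_zero; simp add: lower)+
  moreover have "Q1 $ 0 = L*lam^3" and "Q2 $ 0 = 2*L^2*lam^2 - 4*(b1*b2*b3*b4)*lam^3"
    and "Q3 $ 0 = L*lam^2"
    using assms(2-) by (simp_all add: Q1_def Q2_def Q3_def B_def power2_eq_square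
        power3_eq_cube algebra_simps)
  ultimately show ?thesis
    by simp
qed

text \<open>The linearisation of the leading system at order n, with y = lam^n and s = lam^(1-n):
  its determinant is proportional to (y - 1)^2.\<close>
lemma linearised_leading_system_trivial:
  fixes a g L lam B y s :: "'a::field"
  assumes L: "L \<noteq> 0" and lamB: "B * lam = L^2" and sy: "s * y = lam" and lam: "lam \<noteq> 0"
    and y: "y \<noteq> 1" and two: "(2::'a) \<noteq> 0"
    and e1: "a * (B*L^2*lam) + g * (2*B*L*lam - 4*L^3) + s*a * (B*L^2) = 0"
    and e2: "g * (L*lam^3) + s*a * (2*L^2*lam^2 - 4*B*lam^3) + s*g * (L*lam^2) = 0"
  shows "a = 0 \<and> g = 0"
proof -
  have "0 = y * (a * (B*L^2*lam) + g * (2*B*L*lam - 4*L^3) + s*a * (B*L^2))"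
    using e1 by simp
  also have "\<dots> = L^3 * (L*a*(y + 1) - 2*y*g)"
    using lamB sy by algebra
  finally have h1: "L*a*(y + 1) = 2*y*g"
    using L by simp
  have "0 = y * (g * (L*lam^3) + s*a * (2*L^2*lam^2 - 4*B*lam^3) + s*g * (L*lam^2))"
    using e2 by simp
  also have "\<dots> = L*lam^3*(g*(y + 1) - 2*L*a)"
    using lamB sy by algebra
  finally have h2: "g*(y + 1) = 2*L*a"
    using L lam by simp
  have "L*a*(y - 1)^2 = 0"
    using h1 h2 by algebra
  then have a: "a = 0"
    using L y by simp
  moreover have "y \<noteq> 0"
    using sy lam by auto
  ultimately show ?thesis
    using h1 two by simp
qed

lemma leading_system_unique:
  fixes A G A' G' :: "'a::field fps"
  assumes two: "(2::'a) \<noteq> 0" and L: "L \<noteq> 0" and lamB: "b1 * b2 * b3 * b4 * lam = L^2"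
    and lam_pow: "\<And>n. n > 0 \<Longrightarrow> lam ^ n \<noteq> 1"
    and S: "leading_system lam b1 b2 b3 b4 A G" and S': "leading_system lam b1 b2 b3 b4 A' G'"
    and init: "A $ 0 = 1" "A' $ 0 = 1" "G $ 0 = L" "G' $ 0 = L"
  shows "A = A' \<and> G = G'"
proof -
  have lam: "lam \<noteq> 0"
    using lamB L by auto
  let ?C = "phi_scale_fps lam A" and ?C' = "phi_scale_fps lam A'"
  let ?D = "phi_scale_fps lam G" and ?D' = "phi_scale_fps lam G'"
  have "A $ n = A' $ n \<and> G $ n = G' $ n" for n
  proof (induction n rule: less_induct)
    case (less n)
    show ?case
    proof (cases "n = 0")
      case False
      define s where "s = lam powi (1 - int n)"
      have lower: "A $ k = A' $ k \<and> G $ k = G' $ k \<and> ?C $ k = ?C' $ k \<and> ?D $ k = ?D' $ k"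
        if "k < n" for k
        using less.IH[OF that] by simp
      have "(residual1 b1 b2 b3 b4 A G ?C - residual1 b1 b2 b3 b4 A' G' ?C') $ n = 0"
           "(residual2 b1 b2 b3 b4 G ?C ?D - residual2 b1 b2 b3 b4 G' ?C' ?D') $ n = 0"
        using S S' by (simp_all add: leading_system_def)
      then have e1: "(A $ n - A' $ n) * (b1*b2*b3*b4*L^2*lam)
            + (G $ n - G' $ n) * (2*(b1*b2*b3*b4)*L*lam - 4*L^3)
            + s*(A $ n - A' $ n) * (b1*b2*b3*b4*L^2) = 0"
        and e2: "(G $ n - G' $ n) * (L*lam^3)
            + s*(A $ n - A' $ n) * (2*L^2*lam^2 - 4*(b1*b2*b3*b4)*lam^3)
            + s*(G $ n - G' $ n) * (L*lam^2) = 0"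
        using residual1_difference_nth[of n A A' G G' ?C ?C' L lam b1 b2 b3 b4]
          residual2_difference_nth[of n G G' ?C ?C' ?D ?D' L lam b1 b2 b3 b4] lower init
        by (simp_all add: s_def right_diff_distrib mult.assoc)
      have "s * lam ^ n = lam"
        using lam by (simp add: s_def power_int_diff)
      from linearised_leading_system_trivial[OF L lamB this lam lam_pow two e1 e2] False
      show ?thesis
        by simp
    qed (use init in simp)
  qed
  then show ?thesis
    by (simp add: fps_eq_iff)
qed

subsection \<open>The quadratic solution\<close>

text \<open>After the substitution x = (B - L^2)^2 z the explicit solution becomes polynomial, and
  both equations are identities in the elementary symmetric functions e1, e2, e3, B of b1, ..., b4;
  N is the product of the six factors L + b_i b_j.\<close>
lemma quadratic_identity_1:
  fixes z x L e1 e2 e3 B p r N A G C :: "'a::idom"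
  assumes "p = B*e1 + 2*e3*L + e1*L^2"
    and "r = B*e3 + 2*B*e1*L + e3*L^2"
    and "N = L^6 + e2*L^5 + (e1*e3 - B)*L^4 + (e1*e1*B - 2*e2*B + e3*e3)*L^3
      + B*(e1*e3 - B)*L^2 + B^2*e2*L + B^3"
    and "A = 1 - L*p*z + L*N*z^2"
    and "G = L - L*r*z + B*N*z^2"
    and "C = L^3 - B*L^2*p*z + B^2*N*z^2"
    and "x = (B - L^2)^2*z"
  shows "B*(A*G - x^2)*(G*C - B*L*x^2) = B*L*(G^4 - e1*G^3*x + e2*G^2*x^2 - e3*G*x^3 + B*x^4)"
  unfolding assms(4-) unfolding assms(1-3) by algebra

lemma quadratic_identity_2:
  fixes z x L e1 e2 e3 B p r N G C D :: "'a::idom"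
  assumes "p = B*e1 + 2*e3*L + e1*L^2"
    and "r = B*e3 + 2*B*e1*L + e3*L^2"
    and "N = L^6 + e2*L^5 + (e1*e3 - B)*L^4 + (e1*e1*B - 2*e2*B + e3*e3)*L^3
      + B*(e1*e3 - B)*L^2 + B^2*e2*L + B^3"
    and "G = L - L*r*z + B*N*z^2"
    and "C = L^3 - B*L^2*p*z + B^2*N*z^2"
    and "D = L^5 - B*L^3*r*z + B^3*N*z^2"
    and "x = (B - L^2)^2*z"
  shows "B*(G*C - B*L*x^2)*(D*C - B^2*L^3*x^2)
     = B*C^4 - e3*C^3*x*B*L + e2*C^2*x^2*B^2*L^2 - e1*C*x^3*B^3*L^3 + x^4*B^4*L^4"
  unfolding assms(4-) unfolding assms(1-3) by algebra

lemma product4_expand: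
  fixes g x b1 b2 b3 b4 :: "'a::idom"
  shows "(g - b1*x)*(g - b2*x)*(g - b3*x)*(g - b4*x)
    = g^4 - (b1+b2+b3+b4)*g^3*x + (b1*b2+b1*b3+b1*b4+b2*b3+b2*b4+b3*b4)*g^2*x^2
      - (b1*b2*b3+b1*b2*b4+b1*b3*b4+b2*b3*b4)*g*x^3 + b1*b2*b3*b4*x^4"
  by algebra

lemma quadratic_solves_eq1:
  fixes X L b1 b2 b3 b4 B e1 e2 e3 p r N w a1 a2 g1 g2 c0 c1 c2 :: "'a::idom"
  assumes hB: "B = b1*b2*b3*b4" and he1: "e1 = b1+b2+b3+b4"
    and he2: "e2 = b1*b2+b1*b3+b1*b4+b2*b3+b2*b4+b3*b4"
    and he3: "e3 = b1*b2*b3+b1*b2*b4+b1*b3*b4+b2*b3*b4"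
    and hp: "p = B*e1 + 2*e3*L + e1*L^2" and hr: "r = B*e3 + 2*B*e1*L + e3*L^2"
    and hN: "N = L^6 + e2*L^5 + (e1*e3 - B)*L^4 + (e1*e1*B - 2*e2*B + e3*e3)*L^3
      + B*(e1*e3 - B)*L^2 + B^2*e2*L + B^3"
    and hw: "w*(B - L^2)^2 = 1" and BL: "B*L \<noteq> 0"
    and "a1 = -(L*p*w)" "a2 = L*N*w^2" "g1 = -(L*r*w)" "g2 = B*N*w^2"
    and "B*L*c0 = L^3" "B*L*c1 = -(B*L^2*p*w)" "B*L*c2 = B^2*N*w^2"
  defines "A \<equiv> 1 + a1*X + a2*X^2" and "G \<equiv> L + g1*X + g2*X^2" and "C \<equiv> c0 + c1*X + c2*X^2"
  shows "B*(A*G - X^2)*(G*C - X^2) = (G - b1*X)*(G - b2*X)*(G - b3*X)*(G - b4*X)"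
proof -
  define z where "z = w*X"
  have hx: "X = (B - L^2)^2*z"
    unfolding z_def by (metis hw mult.assoc mult.commute mult_1)
  have hA: "A = 1 - L*p*z + L*N*z^2" and hG: "G = L - L*r*z + B*N*z^2"
    and hC: "B*L*C = L^3 - B*L^2*p*z + B^2*N*z^2"
    using assms(10-16) unfolding A_def G_def C_def z_def by algebra+
  have "(B*L)*(B*(A*G - X^2)*(G*C - X^2)) = B*(A*G - X^2)*(G*(B*L*C) - B*L*X^2)"
    by algebra
  also have "\<dots> = (B*L)*(G^4 - e1*G^3*X + e2*G^2*X^2 - e3*G*X^3 + B*X^4)"
    by (rule quadratic_identity_1[OF hp hr hN hA hG hC hx])
  also have "\<dots> = (B*L)*((G - b1*X)*(G - b2*X)*(G - b3*X)*(G - b4*X))"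
    unfolding product4_expand hB he1 he2 he3 ..
  finally show ?thesis
    using BL by simp
qed

lemma quadratic_solves_eq2:
  fixes X L b1 b2 b3 b4 k1 k2 k3 k4 B e1 e2 e3 p r N w g1 g2 c0 c1 c2 d0 d1 d2 :: "'a::idom"
  assumes hB: "B = b1*b2*b3*b4" and he1: "e1 = b1+b2+b3+b4"
    and he2: "e2 = b1*b2+b1*b3+b1*b4+b2*b3+b2*b4+b3*b4"
    and he3: "e3 = b1*b2*b3+b1*b2*b4+b1*b3*b4+b2*b3*b4"
    and hk: "b1*k1 = 1" "b2*k2 = 1" "b3*k3 = 1" "b4*k4 = 1"
    and hp: "p = B*e1 + 2*e3*L + e1*L^2" and hr: "r = B*e3 + 2*B*e1*L + e3*L^2"
    and hN: "N = L^6 + e2*L^5 + (e1*e3 - B)*L^4 + (e1*e1*B - 2*e2*B + e3*e3)*L^3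
      + B*(e1*e3 - B)*L^2 + B^2*e2*L + B^3"
    and hw: "w*(B - L^2)^2 = 1" and BL: "B*L \<noteq> 0"
    and "g1 = -(L*r*w)" "g2 = B*N*w^2"
    and "B*L*c0 = L^3" "B*L*c1 = -(B*L^2*p*w)" "B*L*c2 = B^2*N*w^2"
    and "B*L^2*d0 = L^5" "B*L^2*d1 = -(B*L^3*r*w)" "B*L^2*d2 = B^3*N*w^2"
  defines "G \<equiv> L + g1*X + g2*X^2" and "C \<equiv> c0 + c1*X + c2*X^2" and "D \<equiv> d0 + d1*X + d2*X^2"
  shows "(G*C - X^2)*(D*C - X^2) = B*(C - k1*X)*(C - k2*X)*(C - k3*X)*(C - k4*X)"
proof -
  define z where "z = w*X"
  have hx: "X = (B - L^2)^2*z"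
    unfolding z_def by (metis hw mult.assoc mult.commute mult_1)
  have hG: "G = L - L*r*z + B*N*z^2" and hC: "B*L*C = L^3 - B*L^2*p*z + B^2*N*z^2"
    and hD: "B*L^2*D = L^5 - B*L^3*r*z + B^3*N*z^2"
    using assms(14-21) unfolding G_def C_def D_def z_def by algebra+
  have hk1: "B*(k1+k2+k3+k4) = e3" and hk2: "B*(k1*k2+k1*k3+k1*k4+k2*k3+k2*k4+k3*k4) = e2"
    and hk3: "B*(k1*k2*k3+k1*k2*k4+k1*k3*k4+k2*k3*k4) = e1" and hk4: "B*(k1*k2*k3*k4) = 1"
    using hk unfolding hB he1 he2 he3 by algebra+
  have "(B*L)^4*((G*C - X^2)*(D*C - X^2))
      = B*(G*(B*L*C) - B*L*X^2)*((B*L^2*D)*(B*L*C) - B^2*L^3*X^2)"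
    by algebra
  also have "\<dots> = B*(B*L*C)^4 - e3*(B*L*C)^3*X*B*L + e2*(B*L*C)^2*X^2*B^2*L^2
      - e1*(B*L*C)*X^3*B^3*L^3 + X^4*B^4*L^4"
    by (rule quadratic_identity_2[OF hp hr hN hG hC hD hx])
  also have "\<dots> = (B*L)^4*(B*C^4 - B*(k1+k2+k3+k4)*C^3*X
      + B*(k1*k2+k1*k3+k1*k4+k2*k3+k2*k4+k3*k4)*C^2*X^2
      - B*(k1*k2*k3+k1*k2*k4+k1*k3*k4+k2*k3*k4)*C*X^3 + B*(k1*k2*k3*k4)*X^4)"
    unfolding hk1 hk2 hk3 hk4 by algebra
  also have "\<dots> = (B*L)^4*(B*(C - k1*X)*(C - k2*X)*(C - k3*X)*(C - k4*X))"
    by algebra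
  finally show ?thesis
    using BL by simp
qed

lemma leading_system_quadratic_solution:
  fixes L b1 b2 b3 b4 :: "'a::field"
  assumes b: "b1 \<noteq> 0" "b2 \<noteq> 0" "b3 \<noteq> 0" "b4 \<noteq> 0" and L: "L \<noteq> 0"
    and d: "b1*b2*b3*b4 \<noteq> L^2"
  defines "B \<equiv> b1*b2*b3*b4" and "e1 \<equiv> b1+b2+b3+b4"
    and "e2 \<equiv> b1*b2+b1*b3+b1*b4+b2*b3+b2*b4+b3*b4"
    and "e3 \<equiv> b1*b2*b3+b1*b2*b4+b1*b3*b4+b2*b3*b4"
  defines "p \<equiv> B*e1 + 2*e3*L + e1*L^2" and "r \<equiv> B*e3 + 2*B*e1*L + e3*L^2"
    and "N \<equiv> L^6 + e2*L^5 + (e1*e3 - B)*L^4 + (e1*e1*B - 2*e2*B + e3*e3)*L^3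
      + B*(e1*e3 - B)*L^2 + B^2*e2*L + B^3"
    and "w \<equiv> inverse ((B - L^2)^2)"
  shows "leading_system (L^2 / B) b1 b2 b3 b4
     (1 + fps_const (-(L*p*w)) * fps_X + fps_const (L*N*w^2) * fps_X^2)
     (fps_const L + fps_const (-(L*r*w)) * fps_X + fps_const (B*N*w^2) * fps_X^2)"
proof -
  define lam where "lam = L^2 / B"
  have B0: "B \<noteq> 0"
    using b by (simp add: B_def)
  have lam0: "lam \<noteq> 0"
    using B0 L by (simp add: lam_def)
  let ?c = "fps_const :: 'a \<Rightarrow> 'a fps"
  have scA: "phi_scale_fps lam (1 + ?c (-(L*p*w)) * fps_X + ?c (L*N*w^2) * fps_X^2)
      = ?c lam + ?c (-(L*p*w)) * fps_X + ?c (L*N*w^2 / lam) * fps_X^2"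
    using phi_scale_fps_quadratic[OF lam0, of 1] by simp
  have scG: "phi_scale_fps lam (?c L + ?c (-(L*r*w)) * fps_X + ?c (B*N*w^2) * fps_X^2)
      = ?c (lam*L) + ?c (-(L*r*w)) * fps_X + ?c (B*N*w^2 / lam) * fps_X^2"
    using phi_scale_fps_quadratic[OF lam0] by simp
  have hB: "?c B = ?c b1 * ?c b2 * ?c b3 * ?c b4"
    and he1: "?c e1 = ?c b1 + ?c b2 + ?c b3 + ?c b4"
    and he2: "?c e2 = ?c b1*?c b2 + ?c b1*?c b3 + ?c b1*?c b4 + ?c b2*?c b3 + ?c b2*?c b4
      + ?c b3*?c b4"
    and he3: "?c e3 = ?c b1*?c b2*?c b3 + ?c b1*?c b2*?c b4 + ?c b1*?c b3*?c b4
      + ?c b2*?c b3*?c b4"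
    and hp: "?c p = ?c B * ?c e1 + 2 * ?c e3 * ?c L + ?c e1 * ?c L^2"
    and hr: "?c r = ?c B * ?c e3 + 2 * ?c B * ?c e1 * ?c L + ?c e3 * ?c L^2"
    and hN: "?c N = ?c L^6 + ?c e2 * ?c L^5 + (?c e1 * ?c e3 - ?c B) * ?c L^4
      + (?c e1 * ?c e1 * ?c B - 2 * ?c e2 * ?c B + ?c e3 * ?c e3) * ?c L^3
      + ?c B * (?c e1 * ?c e3 - ?c B) * ?c L^2 + ?c B^2 * ?c e2 * ?c L + ?c B^3"
    by (simp_all add: B_def e1_def e2_def e3_def p_def r_def N_def numeral_fps_const)
  have hk: "?c b * ?c (inverse b) = 1" if "b \<noteq> 0" for b
    using that by simp
  have hw: "?c w * (?c B - ?c L^2)^2 = 1"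
    using d by (simp add: w_def B_def)
  have BL: "?c B * ?c L \<noteq> 0"
    using B0 L by simp
  have ha: "?c (-(L*p*w)) = -(?c L * ?c p * ?c w)" "?c (L*N*w^2) = ?c L * ?c N * ?c w^2"
    "?c (-(L*r*w)) = -(?c L * ?c r * ?c w)" "?c (B*N*w^2) = ?c B * ?c N * ?c w^2"
    by simp_all
  have hc: "?c B * ?c L * ?c lam = ?c L^3"
    "?c B * ?c L * ?c (-(L*p*w)) = -(?c B * ?c L^2 * ?c p * ?c w)"
    "?c B * ?c L * ?c (L*N*w^2 / lam) = ?c B^2 * ?c N * ?c w^2"
    "?c B * ?c L^2 * ?c (lam*L) = ?c L^5"
    "?c B * ?c L^2 * ?c (-(L*r*w)) = -(?c B * ?c L^3 * ?c r * ?c w)"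
    "?c B * ?c L^2 * ?c (B*N*w^2 / lam) = ?c B^3 * ?c N * ?c w^2"
    using B0 L by (simp_all add: lam_def field_simps eval_nat_numeral)
  show ?thesis
    unfolding leading_system_def residual1_def residual2_def lam_def [symmetric] B_def [symmetric]
      scA scG right_minus_eq
    using quadratic_solves_eq1[OF hB he1 he2 he3 hp hr hN hw BL ha hc(1-3)]
      quadratic_solves_eq2[OF hB he1 he2 he3 hk[OF b(1)] hk[OF b(2)] hk[OF b(3)] hk[OF b(4)]
        hp hr hN hw BL ha(3,4) hc]
    by blast
qed

lemma quadratic_solution_coefficients:
  fixes L b1 b2 b3 b4 :: "'a::field"
  assumes b: "b1 \<noteq> 0" "b2 \<noteq> 0" "b3 \<noteq> 0" "b4 \<noteq> 0" and L: "L \<noteq> 0"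
  defines "B \<equiv> b1*b2*b3*b4" and "e1 \<equiv> b1+b2+b3+b4"
    and "e2 \<equiv> b1*b2+b1*b3+b1*b4+b2*b3+b2*b4+b3*b4"
    and "e3 \<equiv> b1*b2*b3+b1*b2*b4+b1*b3*b4+b2*b3*b4"
    and "t1 \<equiv> inverse b1 + inverse b2 + inverse b3 + inverse b4"
    and "t3 \<equiv> inverse b1 * inverse b2 * inverse b3 + inverse b1 * inverse b2 * inverse b4
      + inverse b1 * inverse b3 * inverse b4 + inverse b2 * inverse b3 * inverse b4"
  defines "p \<equiv> B*e1 + 2*e3*L + e1*L^2" and "r \<equiv> B*e3 + 2*B*e1*L + e3*L^2"
    and "N \<equiv> L^6 + e2*L^5 + (e1*e3 - B)*L^4 + (e1*e1*B - 2*e2*B + e3*e3)*L^3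
      + B*(e1*e3 - B)*L^2 + B^2*e2*L + B^3"
    and "w \<equiv> inverse ((B - L^2)^2)"
    and "mu \<equiv> L * (L + b1*b2) * (L + b1*b3) * (L + b1*b4) * (L + b2*b3) * (L + b2*b4) * (L + b3*b4)
      / (B - L^2)^4"
  shows "-(L*p*w) = - (B * L * (e1 + 2 * t1 * L + t3 * L^2)) / (B - L^2)^2"
    and "-(L*r*w) = - (B * L * (e3 + 2 * e1 * L + t1 * L^2)) / (B - L^2)^2"
    and "L*N*w^2 = mu"
    and "B*N*w^2 = B / L * mu"
proof -
  have Bt1: "B * t1 = e3" and Bt3: "B * t3 = e1"
    using b by (simp_all add: B_def t1_def t3_def e1_def e3_def field_simps)
  have "B * L * (e1 + 2 * t1 * L + t3 * L^2) = L * (B*e1 + 2*(B*t1)*L + (B*t3)*L^2)"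
    by algebra
  then have hp: "B * L * (e1 + 2 * t1 * L + t3 * L^2) = L * p"
    unfolding Bt1 Bt3 p_def by (simp add: ac_simps)
  have "B * L * (e3 + 2 * e1 * L + t1 * L^2) = L * (B*e3 + 2*B*e1*L + (B*t1)*L^2)"
    by algebra
  then have hr: "B * L * (e3 + 2 * e1 * L + t1 * L^2) = L * r"
    unfolding Bt1 r_def .
  show "-(L*p*w) = - (B * L * (e1 + 2 * t1 * L + t3 * L^2)) / (B - L^2)^2"
    unfolding hp w_def by (simp add: divide_inverse)
  show "-(L*r*w) = - (B * L * (e3 + 2 * e1 * L + t1 * L^2)) / (B - L^2)^2"
    unfolding hr w_def by (simp add: divide_inverse)
  have "N = (L + b1*b2) * (L + b1*b3) * (L + b1*b4) * (L + b2*b3) * (L + b2*b4) * (L + b3*b4)"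
    unfolding N_def e1_def e2_def e3_def B_def by algebra
  then show mu: "L*N*w^2 = mu"
    by (simp add: mu_def w_def divide_inverse power_inverse mult.assoc flip: power_mult)
  show "B*N*w^2 = B / L * mu"
    unfolding mu [symmetric] using L by simp
qed

section \<open>The leading-order system of a formal solution\<close>

lemma phi_scale_nth [simp]: "phi_scale lam x $$ j = lam powi (- j) * x $$ j"
  unfolding phi_scale_def by (rule nth_Abs_fls_lower_bound[of "fls_subdegree x"]) simp

lemma phi_scale_0 [simp]: "phi_scale lam 0 = 0"
  by (intro fls_eqI) simp

lemma qshift_nth: "qshift q lam f $ n = fls_const (cK q ^ n) * phi_scale lam (f $ n)"
  by (simp add: qshift_def)

lemma fps_eq_X_times_shift:
  fixes f :: "'a::comm_ring_1 fps"
  assumes "f $ 0 = 0"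
  shows "f = fps_X * fps_shift 1 f"
proof (rule fps_ext)
  fix n
  show "f $ n = (fps_X * fps_shift 1 f) $ n"
    using assms by (cases n) simp_all
qed

lemma qPA1_lhs_nth_4:
  fixes u v w y z :: "'a::field fps"
  assumes "u $ 0 = 0" "v $ 0 = 0" "w $ 0 = 0" "y $ 0 = 0" "z $ 0 = 0"
  shows "((u*v - fps_const P * fps_X^2) * (w*y - fps_const Q * fps_X^2) * (z - fps_const c5)
      * (z - fps_const c6) * (z - fps_const c7) * (z - fps_const c8)) $ 4
    = (u$1 * v$1 - P) * (w$1 * y$1 - Q) * (- c5) * (- c6) * (- c7) * (- c8)"
proof -
  let ?s = "fps_shift 1"
  have "(u*v - fps_const P * fps_X^2) * (w*y - fps_const Q * fps_X^2) * (z - fps_const c5)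
      * (z - fps_const c6) * (z - fps_const c7) * (z - fps_const c8)
    = fps_X^4 * ((?s u * ?s v - fps_const P) * (?s w * ?s y - fps_const Q)
      * (fps_X * ?s z - fps_const c5) * (fps_X * ?s z - fps_const c6)
      * (fps_X * ?s z - fps_const c7) * (fps_X * ?s z - fps_const c8))"
    using assms[THEN fps_eq_X_times_shift] by algebra
  then show ?thesis
    by (simp only: fps_X_power_mult_nth) simp
qed

lemma qPA1_rhs_nth_4:
  fixes u v w y z :: "'a::field fps"
  assumes "u $ 0 = 0" "v $ 0 = 0" "w $ 0 = 0" "y $ 0 = 0" "z $ 0 = 0"
  shows "((u*v - 1) * (w*y - 1) * (z - fps_const c1 * fps_X) * (z - fps_const c2 * fps_X)
      * (z - fps_const c3 * fps_X) * (z - fps_const c4 * fps_X)) $ 4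
    = (z$1 - c1) * (z$1 - c2) * (z$1 - c3) * (z$1 - c4)"
proof -
  let ?s = "fps_shift 1"
  have "(u*v - 1) * (w*y - 1) * (z - fps_const c1 * fps_X) * (z - fps_const c2 * fps_X)
      * (z - fps_const c3 * fps_X) * (z - fps_const c4 * fps_X)
    = fps_X^4 * ((u*v - 1) * (w*y - 1) * (?s z - fps_const c1) * (?s z - fps_const c2)
      * (?s z - fps_const c3) * (?s z - fps_const c4))"
    using fps_eq_X_times_shift[OF assms(5)] by algebra
  then show ?thesis
    using assms by (simp only: fps_X_power_mult_nth) simp
qed

lemma formal_solutionD:
  assumes "formal_solution b1 b2 b3 b4 b5 b6 b7 b8 f g"
  defines "q \<equiv> qq b1 b2 b3 b4 b5 b6 b7 b8"
  defines "fb \<equiv> qshift q (lamK (BB b1 b2 b3 b4)) f"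
    and "gb \<equiv> qshift q (lamK (BB b1 b2 b3 b4)) g"
  defines "c \<equiv> \<lambda>z. fps_const (fls_const (cK z)) :: S"
  shows "f $ 0 = 0" and "g $ 0 = 0"
    and "\<And>n i. i > int n \<Longrightarrow> (f $ n) $$ (- i) = 0 \<and> (g $ n) $$ (- i) = 0"
    and "(g * f - fps_X^2) * (g * fb - c q * fps_X^2) * (g - c b5) * (g - c b6) * (g - c b7)
        * (g - c b8)
      = (g * f - 1) * (g * fb - 1) * (g - c b1 * fps_X) * (g - c b2 * fps_X) * (g - c b3 * fps_X)
        * (g - c b4 * fps_X)"
    and "(g * fb - c q * fps_X^2) * (gb * fb - c (q^2) * fps_X^2) * (fb - c (inverse b5))
        * (fb - c (inverse b6)) * (fb - c (inverse b7)) * (fb - c (inverse b8))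
      = (g * fb - 1) * (gb * fb - 1) * (fb - c (inverse b1 * q) * fps_X)
        * (fb - c (inverse b2 * q) * fps_X) * (fb - c (inverse b3 * q) * fps_X)
        * (fb - c (inverse b4 * q) * fps_X)"
  using assms(1) unfolding formal_solution_def Let_def q_def fb_def gb_def c_def cS_def by simp_all

text \<open>The coefficients of t^4 of the two equations of q-P(A1), with the powers of q
  coming from the shift divided out.\<close>
lemma formal_solution_t1_eq1:
  assumes b: "b5 \<noteq> 0" "b6 \<noteq> 0" "b7 \<noteq> 0" "b8 \<noteq> 0"
    and sol: "formal_solution b1 b2 b3 b4 b5 b6 b7 b8 f g"
  defines "F \<equiv> phi_scale (lamK (BB b1 b2 b3 b4)) (f $ 1)"
  shows "fls_const (cK b1 * cK b2 * cK b3 * cK b4) * (g $ 1 * f $ 1 - 1) * (g $ 1 * F - 1)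
    = (g $ 1 - fls_const (cK b1)) * (g $ 1 - fls_const (cK b2)) * (g $ 1 - fls_const (cK b3))
      * (g $ 1 - fls_const (cK b4))"
proof -
  define q where "q = qq b1 b2 b3 b4 b5 b6 b7 b8"
  define fb where "fb = qshift q (lamK (BB b1 b2 b3 b4)) f"
  let ?c = "\<lambda>z. fls_const (cK z) :: R"
  note D = formal_solutionD[OF sol, folded q_def, folded fb_def]
  have fb0: "fb $ 0 = 0" and fb1: "fb $ 1 = ?c q * F"
    using D(1) by (simp_all add: fb_def qshift_nth F_def)
  from arg_cong[OF D(4), of "\<lambda>s. s $ 4"]
  have "(g$1 * f$1 - 1) * (g$1 * (?c q * F) - ?c q) * (- ?c b5) * (- ?c b6) * (- ?c b7) * (- ?c b8)
      = (g$1 - ?c b1) * (g$1 - ?c b2) * (g$1 - ?c b3) * (g$1 - ?c b4)"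
    unfolding qPA1_rhs_nth_4[OF D(2) D(1) D(2) fb0 D(2)] fb1 [symmetric]
      qPA1_lhs_nth_4[OF D(2) D(1) D(2) fb0 D(2), of 1, unfolded fps_const_1_eq_1 mult_1_left] .
  moreover have "?c q * ?c b5 * ?c b6 * ?c b7 * ?c b8 = fls_const (cK b1 * cK b2 * cK b3 * cK b4)"
    using b by (simp add: q_def qq_def field_simps flip: cK_mult)
  ultimately show ?thesis
    by algebra
qed

lemma formal_solution_t1_eq2:
  assumes b: "b1 \<noteq> 0" "b2 \<noteq> 0" "b3 \<noteq> 0" "b4 \<noteq> 0"
      "b5 \<noteq> 0" "b6 \<noteq> 0" "b7 \<noteq> 0" "b8 \<noteq> 0"
    and sol: "formal_solution b1 b2 b3 b4 b5 b6 b7 b8 f g"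
  defines "F \<equiv> phi_scale (lamK (BB b1 b2 b3 b4)) (f $ 1)"
    and "G \<equiv> phi_scale (lamK (BB b1 b2 b3 b4)) (g $ 1)"
  shows "(g $ 1 * F - 1) * (G * F - 1)
    = fls_const (cK b1 * cK b2 * cK b3 * cK b4) * (F - fls_const (inverse (cK b1)))
      * (F - fls_const (inverse (cK b2))) * (F - fls_const (inverse (cK b3)))
      * (F - fls_const (inverse (cK b4)))"
proof -
  define q where "q = qq b1 b2 b3 b4 b5 b6 b7 b8"
  define fb where "fb = qshift q (lamK (BB b1 b2 b3 b4)) f"
  define gb where "gb = qshift q (lamK (BB b1 b2 b3 b4)) g"
  let ?c = "\<lambda>z. fls_const (cK z) :: R" and ?i = "\<lambda>z. fls_const (inverse (cK z)) :: R"
  note D = formal_solutionD[OF sol, folded q_def, folded fb_def gb_def]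
  have fb0: "fb $ 0 = 0" and gb0: "gb $ 0 = 0" and fb1: "fb $ 1 = ?c q * F"
    and gb1: "gb $ 1 = ?c q * G"
    using D(1,2) by (simp_all add: fb_def gb_def qshift_nth F_def G_def)
  have hk: "?c (inverse b * q) = ?i b * ?c q" and hi: "?c (inverse b) = ?i b" for b
    by (simp_all add: cK_mult cK_inverse)
  have hq: "?c (q^2) = ?c q ^ 2"
    by (simp add: cK_power fls_const_power)
  from arg_cong[OF D(5), of "\<lambda>s. s $ 4"]
  have "(g$1 * (?c q * F) - ?c q) * (?c q * G * (?c q * F) - ?c q ^ 2)
      * (- ?i b5) * (- ?i b6) * (- ?i b7) * (- ?i b8)
      = (?c q * F - ?i b1 * ?c q) * (?c q * F - ?i b2 * ?c q)
        * (?c q * F - ?i b3 * ?c q) * (?c q * F - ?i b4 * ?c q)"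
    unfolding qPA1_rhs_nth_4[OF D(2) fb0 gb0 fb0 fb0] qPA1_lhs_nth_4[OF D(2) fb0 gb0 fb0 fb0]
      fb1 gb1 hk hi hq .
  moreover have "?c q * ?c b5 * ?c b6 * ?c b7 * ?c b8 = fls_const (cK b1 * cK b2 * cK b3 * cK b4)"
    using b by (simp add: q_def qq_def field_simps flip: cK_mult)
  moreover have "?i b * ?c b = 1" if "b \<noteq> 0" for b
    using that by simp
  note this [OF b(5)] this [OF b(6)] this [OF b(7)] this [OF b(8)]
  ultimately have "?c q ^ 3 * (?i b5 * ?i b6 * ?i b7 * ?i b8) * ((g $ 1 * F - 1) * (G * F - 1)
      - fls_const (cK b1 * cK b2 * cK b3 * cK b4) * (F - ?i b1) * (F - ?i b2) * (F - ?i b3)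
        * (F - ?i b4))
      = 0"
    by algebra
  moreover have "?c q ^ 3 * (?i b5 * ?i b6 * ?i b7 * ?i b8) \<noteq> 0"
    using b by (simp add: q_def qq_def)
  ultimately show ?thesis
    by (metis mult_eq_0_iff right_minus_eq)
qed

lemma fls_X_times_X_inv: "fls_X * fls_X_inv = (1::'a::field fls)"
  by (simp add: fls_X_times_conv_shift)

lemma fls_X_inv_times_regpart_X_times:
  fixes f :: "'a::field fls"
  assumes "\<And>j. j < -1 \<Longrightarrow> f $$ j = 0"
  shows "fls_X_inv * fps_to_fls (fls_regpart (fls_X * f)) = f"
  using assms by (intro fls_eqI) (auto simp: fls_X_inv_times_conv_shift fls_X_times_conv_shift)

lemma phi_scale_X_inv_times_fps:
  "phi_scale lam (fls_X_inv * fps_to_fls A) = fls_X_inv * fps_to_fls (phi_scale_fps lam A)"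
proof (rule fls_eqI)
  fix j :: int
  show "phi_scale lam (fls_X_inv * fps_to_fls A) $$ j
    = (fls_X_inv * fps_to_fls (phi_scale_fps lam A)) $$ j"
  proof (cases "j < -1")
    case False
    then have "1 - int (nat (j + 1)) = - j"
      by simp
    with False show ?thesis
      by (simp add: fls_X_inv_times_conv_shift)
  qed (simp add: fls_X_inv_times_conv_shift)
qed

lemma fps_to_fls_residual1:
  fixes A G C :: "'a::field fps"
  defines "a \<equiv> fls_X_inv * fps_to_fls A" and "g \<equiv> fls_X_inv * fps_to_fls G"
    and "c \<equiv> fls_X_inv * fps_to_fls C"
  shows "fps_to_fls (residual1 b1 b2 b3 b4 A G C)
    = fls_X^4 * (fls_const (b1*b2*b3*b4) * (g*a - 1) * (g*c - 1)
      - (g - fls_const b1) * (g - fls_const b2) * (g - fls_const b3) * (g - fls_const b4))"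
proof -
  have h: "fps_to_fls A = fls_X * a" "fps_to_fls G = fls_X * g" "fps_to_fls C = fls_X * c"
    unfolding a_def g_def c_def by (simp_all add: fls_X_times_X_inv flip: mult.assoc)
  show ?thesis
    unfolding residual1_def fps_to_fls_minus fls_times_fps_to_fls fps_to_fls_power fps_const_to_fls
      fps_X_to_fls h
    by algebra
qed

lemma fps_to_fls_residual2:
  fixes G C D :: "'a::field fps"
  defines "g \<equiv> fls_X_inv * fps_to_fls G" and "c \<equiv> fls_X_inv * fps_to_fls C"
    and "d \<equiv> fls_X_inv * fps_to_fls D"
  shows "fps_to_fls (residual2 b1 b2 b3 b4 G C D)
    = fls_X^4 * ((g*c - 1) * (d*c - 1) - fls_const (b1*b2*b3*b4) * (c - fls_const (inverse b1))
      * (c - fls_const (inverse b2)) * (c - fls_const (inverse b3)) * (c - fls_const (inverse b4)))"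
proof -
  have h: "fps_to_fls G = fls_X * g" "fps_to_fls C = fls_X * c" "fps_to_fls D = fls_X * d"
    unfolding g_def c_def d_def by (simp_all add: fls_X_times_X_inv flip: mult.assoc)
  show ?thesis
    unfolding residual2_def fps_to_fls_minus fls_times_fps_to_fls fps_to_fls_power fps_const_to_fls
      fps_X_to_fls h
    by algebra
qed

lemma leading_system_of_t1_system:
  fixes f1 g1 :: R and lam b1 b2 b3 b4 :: K
  assumes f1: "\<And>j. j < -1 \<Longrightarrow> f1 $$ j = 0" and g1: "\<And>j. j < -1 \<Longrightarrow> g1 $$ j = 0"
    and E1: "fls_const (b1*b2*b3*b4) * (g1*f1 - 1) * (g1 * phi_scale lam f1 - 1)
      = (g1 - fls_const b1) * (g1 - fls_const b2) * (g1 - fls_const b3) * (g1 - fls_const b4)"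
    and E2: "(g1 * phi_scale lam f1 - 1) * (phi_scale lam g1 * phi_scale lam f1 - 1)
      = fls_const (b1*b2*b3*b4) * (phi_scale lam f1 - fls_const (inverse b1))
        * (phi_scale lam f1 - fls_const (inverse b2)) * (phi_scale lam f1 - fls_const (inverse b3))
        * (phi_scale lam f1 - fls_const (inverse b4))"
  shows "leading_system lam b1 b2 b3 b4 (fls_regpart (fls_X * f1)) (fls_regpart (fls_X * g1))"
proof -
  let ?A = "fls_regpart (fls_X * f1)" and ?G = "fls_regpart (fls_X * g1)"
  have hf: "fls_X_inv * fps_to_fls ?A = f1"
    using f1 by (rule fls_X_inv_times_regpart_X_times)
  have hg: "fls_X_inv * fps_to_fls ?G = g1"
    using g1 by (rule fls_X_inv_times_regpart_X_times)
  have hF: "fls_X_inv * fps_to_fls (phi_scale_fps lam ?A) = phi_scale lam f1"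
    and hG: "fls_X_inv * fps_to_fls (phi_scale_fps lam ?G) = phi_scale lam g1"
    by (metis phi_scale_X_inv_times_fps hf, metis phi_scale_X_inv_times_fps hg)
  have "fps_to_fls (residual1 b1 b2 b3 b4 ?A ?G (phi_scale_fps lam ?A)) = 0"
    and "fps_to_fls (residual2 b1 b2 b3 b4 ?G (phi_scale_fps lam ?A) (phi_scale_fps lam ?G)) = 0"
    unfolding fps_to_fls_residual1 fps_to_fls_residual2 hf hg hF hG E1 E2 by simp_all
  then show ?thesis
    unfolding leading_system_def by simp
qed

section \<open>The coefficients of t\<close>

lemma leading_system_Feq_Geq:
  assumes b: "b1 \<noteq> 0" "b2 \<noteq> 0" "b3 \<noteq> 0" "b4 \<noteq> 0"
  shows "leading_system (lamK (BB b1 b2 b3 b4)) (cK b1) (cK b2) (cK b3) (cK b4)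
    (1 + fps_const (Feq b1 b2 b3 b4) * fps_X + fps_const (muK b1 b2 b3 b4) * fps_X^2)
    (fps_const LambdaK + fps_const (Geq b1 b2 b3 b4) * fps_X
      + fps_const (cK (BB b1 b2 b3 b4) / LambdaK * muK b1 b2 b3 b4) * fps_X^2)"
proof -
  have b': "cK b1 \<noteq> 0" "cK b2 \<noteq> 0" "cK b3 \<noteq> 0" "cK b4 \<noteq> 0"
    using b by simp_all
  have "cK b1 * cK b2 * cK b3 * cK b4 \<noteq> LambdaK^2"
    using LambdaK_power_neq_cK[of 2 "b1 * b2 * b3 * b4"] by (simp add: cK_mult)
  note S = leading_system_quadratic_solution[OF b' LambdaK_neq_0 this]
    and C = quadratic_solution_coefficients[OF b' LambdaK_neq_0]
  have "Feq b1 b2 b3 b4 = - (cK b1 * cK b2 * cK b3 * cK b4 * LambdaK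
      * ((cK b1 + cK b2 + cK b3 + cK b4)
        + 2 * (inverse (cK b1) + inverse (cK b2) + inverse (cK b3) + inverse (cK b4)) * LambdaK
        + (inverse (cK b1) * inverse (cK b2) * inverse (cK b3)
          + inverse (cK b1) * inverse (cK b2) * inverse (cK b4)
          + inverse (cK b1) * inverse (cK b3) * inverse (cK b4)
          + inverse (cK b2) * inverse (cK b3) * inverse (cK b4)) * LambdaK^2))
      / (cK b1 * cK b2 * cK b3 * cK b4 - LambdaK^2)^2"
    by (simp add: Feq_def Let_def BB_def S1_def S3_def cK_add cK_mult cK_inverse)
  moreover have "Geq b1 b2 b3 b4 = - (cK b1 * cK b2 * cK b3 * cK b4 * LambdaK
      * ((cK b1 * cK b2 * cK b3 + cK b1 * cK b2 * cK b4 + cK b1 * cK b3 * cK b4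
          + cK b2 * cK b3 * cK b4)
        + 2 * (cK b1 + cK b2 + cK b3 + cK b4) * LambdaK
        + (inverse (cK b1) + inverse (cK b2) + inverse (cK b3) + inverse (cK b4)) * LambdaK^2))
      / (cK b1 * cK b2 * cK b3 * cK b4 - LambdaK^2)^2"
    by (simp add: Geq_def Let_def BB_def S1_def S3_def cK_add cK_mult cK_inverse)
  moreover have "muK b1 b2 b3 b4 = LambdaK * (LambdaK + cK b1 * cK b2) * (LambdaK + cK b1 * cK b3)
      * (LambdaK + cK b1 * cK b4) * (LambdaK + cK b2 * cK b3) * (LambdaK + cK b2 * cK b4)
      * (LambdaK + cK b3 * cK b4) / (cK b1 * cK b2 * cK b3 * cK b4 - LambdaK^2)^4"
    by (simp add: muK_def Let_def BB_def cK_mult)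
  moreover have "cK (BB b1 b2 b3 b4) = cK b1 * cK b2 * cK b3 * cK b4"
    by (simp add: BB_def cK_mult)
  moreover have "lamK (BB b1 b2 b3 b4) = LambdaK^2 / (cK b1 * cK b2 * cK b3 * cK b4)"
    by (simp add: lamK_def BB_def cK_mult)
  ultimately show ?thesis
    using S unfolding C by simp
qed

lemma fls_X_inv_times_fps_quadratic:
  fixes c0 c1 c2 :: "'a::field"
  shows "fls_X_inv * fps_to_fls (fps_const c0 + fps_const c1 * fps_X + fps_const c2 * fps_X^2)
    = fls_const c0 * fls_X_inv + fls_const c1 + fls_const c2 * fls_X"
  using fls_X_times_X_inv [where 'a = 'a]
  unfolding fps_to_fls_plus fls_times_fps_to_fls fps_to_fls_power fps_const_to_fls fps_X_to_fls
  by algebra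

lemma fls_X_inv_quadratic_nth:
  fixes c0 c1 c2 :: "'a::field"
  assumes "k \<ge> 2"
  shows "(fls_const c0 * fls_X_inv + fls_const c1 + fls_const c2 * fls_X) $$ k = 0"
  using assms by (simp add: fls_X_times_conv_shift fls_X_inv_times_conv_shift)

theorem mainTheorem5:
  fixes b1 b2 b3 b4 b5 b6 b7 b8 :: complex and f g :: S
  assumes "b1 \<noteq> 0" "b2 \<noteq> 0" "b3 \<noteq> 0" "b4 \<noteq> 0"
      and "b5 \<noteq> 0" "b6 \<noteq> 0" "b7 \<noteq> 0" "b8 \<noteq> 0"
      and sol: "formal_solution b1 b2 b3 b4 b5 b6 b7 b8 f g"
      and F11: "coeffF f 1 1 = 1"
      and G11: "coeffF g 1 1 = LambdaK"
  shows "(f $ 1 = fls_X_inv + fls_const (Feq b1 b2 b3 b4)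
                 + fls_const (muK b1 b2 b3 b4) * fls_X) \<and>
         (g $ 1 = fls_const LambdaK * fls_X_inv + fls_const (Geq b1 b2 b3 b4)
                 + fls_const (cK (BB b1 b2 b3 b4) / LambdaK * muK b1 b2 b3 b4) * fls_X) \<and>
         (\<forall>i::int. i \<le> -2 \<longrightarrow> coeffF f 1 i = 0 \<and> coeffF g 1 i = 0)"
proof -
  note b = assms(1-8)
  define A G where "A = fls_regpart (fls_X * f $ 1)" and "G = fls_regpart (fls_X * g $ 1)"
  have low: "f $ 1 $$ j = 0" "g $ 1 $$ j = 0" if "j < -1" for j
    using formal_solutionD(3)[OF sol, of 1 "- j"] that by simp_all
  have "leading_system (lamK (BB b1 b2 b3 b4)) (cK b1) (cK b2) (cK b3) (cK b4) A G"
    unfolding A_def G_def using low formal_solution_t1_eq1[OF b(5-8) sol]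
      formal_solution_t1_eq2[OF b sol] by (rule leading_system_of_t1_system)
  moreover have "A $ 0 = 1" "G $ 0 = LambdaK"
    using F11 G11 by (simp_all add: A_def G_def coeffF_def fls_X_times_conv_shift)
  moreover have "cK b1 * cK b2 * cK b3 * cK b4 * lamK (BB b1 b2 b3 b4) = LambdaK^2"
    using b by (simp add: lamK_def BB_def cK_mult)
  moreover have "lamK (BB b1 b2 b3 b4) ^ n \<noteq> 1" if "n > 0" for n
    using lamK_power_neq_1 b that by (simp add: BB_def)
  ultimately have "A = 1 + fps_const (Feq b1 b2 b3 b4) * fps_X
        + fps_const (muK b1 b2 b3 b4) * fps_X^2
      \<and> G = fps_const LambdaK + fps_const (Geq b1 b2 b3 b4) * fps_X
        + fps_const (cK (BB b1 b2 b3 b4) / LambdaK * muK b1 b2 b3 b4) * fps_X^2"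
    using leading_system_unique[OF two_K_neq_0 LambdaK_neq_0] leading_system_Feq_Geq[OF b(1-4)]
    by simp
  moreover have "f $ 1 = fls_X_inv * fps_to_fls A" "g $ 1 = fls_X_inv * fps_to_fls G"
    unfolding A_def G_def using low by (simp_all add: fls_X_inv_times_regpart_X_times)
  ultimately show ?thesis
    using fls_X_inv_times_fps_quadratic[of 1] fls_X_inv_times_fps_quadratic[of LambdaK]
      fls_X_inv_quadratic_nth by (auto simp: coeffF_def)
qed

end
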